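(* Let $j,k$ be natural numbers with $0<j<k$ and let $a_0,a_1,a_2,b_0,b_1,b_2$ be real numbers with $a_1+a_2=0$ and $b_1+b_2=0$ (equivalently $A(0)=A(1)$ and $B(0)=B(1)$ for $A(t)=a_0+a_1t^j+a_2t^k$, $B(t)=b_0+b_1t^j+b_2t^k$). Consider the Abel equation $$\frac{dx}{dt}=(a_0+a_1t^j+a_2t^k)x^3+(b_0+b_1t^j+b_2t^k)x^2,\qquad t\in[0,1],$$ and assume it does not have a center at $x=0$. Then it has at most one non-zero periodic orbit, and when this periodic orbit exists it is hyperbolic.
   Context: A periodic orbit is a solution $x(t)$ defined on all of $[0,1]$ with $x(0)=x(1)$; $x\equiv0$ is always one, and non-zero periodic orbits are the others. The Poincaré map is $\Pi(x_0)=x(1;x_0)$ where $x(t;x_0)$ is the solution with $x(0;x_0)=x_0$; a periodic orbit with initial condition $x_0$ is hyperbolic if $\Pi'(x_0)\ne1$. The equation has a center at $x=0$ if there is a neighborhood of $0$ such that every solution starting at $t=0$ in this neighborhood is a periodic orbit. *)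

theory Defs
  imports "HOL-Analysis.Analysis"
begin

definition is_solution :: "(real \<Rightarrow> real \<Rightarrow> real) \<Rightarrow> (real \<Rightarrow> real) \<Rightarrow> bool" where
  "is_solution f x \<longleftrightarrow>
     (\<forall>t\<in>{0..1}. (x has_real_derivative f t (x t)) (at t within {0..1}))"

definition poincare_domain :: "(real \<Rightarrow> real \<Rightarrow> real) \<Rightarrow> real set" where
  "poincare_domain f = {x0. \<exists>x. is_solution f x \<and> x 0 = x0}"

text \<open>Poincare map: x0 maps to x(1;x0) (solutions are unique for the smooth fields considered).\<close>
definition poincare :: "(real \<Rightarrow> real \<Rightarrow> real) \<Rightarrow> real \<Rightarrow> real" where
  "poincare f x0 = (THE y. \<exists>x. is_solution f x \<and> x 0 = x0 \<and> x 1 = y)"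

definition periodic_orbit :: "(real \<Rightarrow> real \<Rightarrow> real) \<Rightarrow> real \<Rightarrow> bool" where
  "periodic_orbit f x0 \<longleftrightarrow> (\<exists>x. is_solution f x \<and> x 0 = x0 \<and> x 1 = x0)"

definition hyperbolic_orbit :: "(real \<Rightarrow> real \<Rightarrow> real) \<Rightarrow> real \<Rightarrow> bool" where
  "hyperbolic_orbit f x0 \<longleftrightarrow>
     (\<exists>d. (poincare f has_real_derivative d) (at x0 within poincare_domain f) \<and> d \<noteq> 1)"

definition has_center :: "(real \<Rightarrow> real \<Rightarrow> real) \<Rightarrow> bool" where
  "has_center f \<longleftrightarrow> (\<exists>e>0. \<forall>x0. \<bar>x0\<bar> < e \<longrightarrow> periodic_orbit f x0)"

definition abel_field :: "(real \<Rightarrow> real) \<Rightarrow> (real \<Rightarrow> real) \<Rightarrow> real \<Rightarrow> real \<Rightarrow> real" where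
  "abel_field A B t x = A t * x ^ 3 + B t * x ^ 2"

end

theory Submission
  imports Defs
begin

text \<open>
  Because \<open>a\<^sub>1 + a\<^sub>2 = 0 = b\<^sub>1 + b\<^sub>2\<close>, both coefficients are affine in the single
  function \<open>g(t) = t\<^sup>j - t\<^sup>k\<close>: \<open>A = a\<^sub>0 + a\<^sub>1 g\<close>, \<open>B = b\<^sub>0 + b\<^sub>1 g\<close>. Put \<open>C = a\<^sub>0 b\<^sub>1 - a\<^sub>1 b\<^sub>0 = A b\<^sub>1 - a\<^sub>1 B\<close>.

  If \<open>C \<noteq> 0\<close>, along a nonzero periodic orbit \<open>x\<close> the function \<open>C (a\<^sub>1 x + b\<^sub>1)\<close> solves a
  linear equation with negative forcing \<open>-C\<^sup>2 x\<^sup>2\<close>, so it never vanishes. Integrating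
  \<open>(F \<circ> x)'\<close> over a period for suitable primitives \<open>F\<close> gives
  \<open>\<integral> (A x + B)/(a\<^sub>1 x + b\<^sub>1) = 0\<close> and \<open>\<integral> (3 A x\<^sup>2 + 2 B x) = C \<integral> x\<^sup>2/(a\<^sub>1 x + b\<^sub>1)\<close>.
  The first integrand is \<open>g\<close> plus a Moebius transform of \<open>x\<close>; for two distinct orbits the
  difference of the integrands has the constant sign of \<open>C (x\<^sub>2 - x\<^sub>1)\<close>, so there is at most
  one orbit. The second identity shows that the multiplier \<open>exp \<integral> (3 A x\<^sup>2 + 2 B x)\<close> of the
  Poincare map is not \<open>1\<close>.

  If \<open>C = 0\<close>, then \<open>A = a \<phi>\<close>, \<open>B = b \<phi>\<close> and the equation is separable. If \<open>\<integral> \<phi> = 0\<close> it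
  has a center; otherwise every nonzero periodic orbit meets, hence equals, the constant
  solution \<open>-b/a\<close>, whose multiplier is \<open>exp (-b p \<integral> \<phi>) \<noteq> 1\<close>.
\<close>

lemma has_real_derivative_ln_abs:
  assumes f: "(f has_real_derivative D) (at x within S)" and nz: "f x \<noteq> 0"
  shows "((\<lambda>y. ln \<bar>f y\<bar>) has_real_derivative D / f x) (at x within S)"
proof -
  have "DERIV (\<lambda>y. ln \<bar>y\<bar>) (f x) :> inverse (f x)"
  proof (cases "f x > 0")
    case True
    show ?thesis
      by (rule has_field_derivative_transform_within_open[OF DERIV_ln[OF True], of "{0<..}"])
         (use True in auto)
  next
    case False
    with nz have neg: "f x < 0" by simp
    have "DERIV (\<lambda>y. ln (- y)) (f x) :> inverse (- f x) * - 1"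
      by (rule DERIV_chain2[OF DERIV_ln DERIV_minus[OF DERIV_ident]]) (use neg in simp)
    then have "DERIV (\<lambda>y. ln (- y)) (f x) :> inverse (f x)" by simp
    then show ?thesis
      by (rule has_field_derivative_transform_within_open[of _ _ _ "{..<0}"]) (use neg in auto)
  qed
  from DERIV_chain2[OF this f] show ?thesis by (simp add: divide_inverse mult.commute)
qed

lemma continuous_on_Icc_abs_bounded:
  fixes h :: "real \<Rightarrow> real"
  assumes "continuous_on {a..b} h"
  obtains M where "\<And>t. t \<in> {a..b} \<Longrightarrow> \<bar>h t\<bar> \<le> M"
proof -
  have "bounded (h ` {a..b})" by (intro compact_imp_bounded compact_continuous_image assms compact_Icc)
  then obtain M where "\<forall>y\<in>h ` {a..b}. norm y \<le> M" by (auto simp: bounded_iff)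
  then show thesis using that[of M] by simp
qed

lemma continuous_nonvanishing_same_sign:
  fixes h :: "real \<Rightarrow> real"
  assumes hc: "continuous_on {a..b} h" and nz: "\<And>t. t \<in> {a..b} \<Longrightarrow> h t \<noteq> 0"
    and s: "s \<in> {a..b}" and t: "t \<in> {a..b}"
  shows "0 < h s * h t"
proof (rule ccontr)
  assume "\<not> 0 < h s * h t"
  moreover have "h s \<noteq> 0" "h t \<noteq> 0" using nz s t by auto
  ultimately have "0 \<in> closed_segment (h s) (h t)"
    by (auto simp: closed_segment_eq_real_ivl zero_less_mult_iff linorder_neq_iff)
  moreover have seg: "closed_segment s t \<subseteq> {a..b}"
    using s t by (simp add: closed_segment_eq_real_ivl)
  ultimately obtain u where "u \<in> closed_segment s t" "h u = 0"
    using IVT'_closed_segment_real[OF _ continuous_on_subset[OF hc seg]] by blast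
  then show False using nz seg by auto
qed

lemma integral_nonvanishing_nonzero:
  fixes h :: "real \<Rightarrow> real"
  assumes "a < b" and hc: "continuous_on {a..b} h" and nz: "\<And>t. t \<in> {a..b} \<Longrightarrow> h t \<noteq> 0"
    and hi: "(h has_integral I) {a..b}"
  shows "I \<noteq> 0"
proof
  assume "I = 0"
  \<comment> \<open>Multiplying by \<open>h a\<close> makes the integrand positive, and a continuous nonnegative
      function with zero integral vanishes.\<close>
  have "((\<lambda>t. h a * h t) has_integral 0) (cbox a b)"
    using has_integral_mult_right[OF hi, of "h a"] \<open>I = 0\<close> by simp
  moreover have "continuous_on (cbox a b) (\<lambda>t. h a * h t)"
    by (simp add: continuous_intros hc)
  moreover have "0 \<le> h a * h t" if "t \<in> box a b" for t
    using continuous_nonvanishing_same_sign[OF hc nz, of a t] that \<open>a < b\<close> by simp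
  ultimately have "h a * h a = 0"
    using has_integral_0_cbox_imp_0[of a b "\<lambda>t. h a * h t" a] \<open>a < b\<close> by simp
  then show False using nz[of a] \<open>a < b\<close> by simp
qed

lemma continuous_on_stays_below:
  fixes d :: "real \<Rightarrow> real"
  assumes dc: "continuous_on {a..b} d" and da: "d a < c"
    and step: "\<And>t. t \<in> {a..b} \<Longrightarrow> (\<And>u. u \<in> {a..t} \<Longrightarrow> d u \<le> c) \<Longrightarrow> d t < c"
    and t: "t \<in> {a..b}"
  shows "d t < c"
proof (rule ccontr)
  assume "\<not> d t < c"
  define S where "S = {u \<in> {a..b}. c \<le> d u}"
  have "t \<in> S" using t \<open>\<not> d t < c\<close> by (simp add: S_def)
  have "closed S"
    unfolding S_def by (rule continuous_on_closed_Collect_le[OF continuous_on_const dc closed_atLeastAtMost])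
  moreover have "bdd_below S" by (rule bdd_belowI[of _ a]) (auto simp: S_def)
  ultimately have \<tau>: "Inf S \<in> S" using closed_contains_Inf \<open>t \<in> S\<close> by blast
  have first: "d u < c" if "u \<in> {a..<Inf S}" for u
    using that cInf_lower[OF _ \<open>bdd_below S\<close>, of u] \<tau> by (force simp: S_def)
  have "\<exists>u\<ge>a. u \<le> Inf S \<and> d u = c"
    by (rule IVT') (use da \<tau> in \<open>auto simp: S_def intro: continuous_on_subset[OF dc]\<close>)
  then obtain u where "u \<in> {a..Inf S}" "d u = c" by auto
  then have "d (Inf S) = c" using first by fastforce
  moreover have "d u \<le> c" if "u \<in> {a..Inf S}" for u
    using first[of u] that \<open>d (Inf S) = c\<close> by (cases "u = Inf S") auto
  then have "d (Inf S) < c" using step \<tau> by (simp add: S_def)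
  ultimately show False by simp
qed

lemma integrating_factor_has_derivative:
  fixes w k r :: "real \<Rightarrow> real"
  assumes der: "\<And>t. t \<in> {0..1} \<Longrightarrow> (w has_real_derivative k t * w t + r t) (at t within {0..1})"
    and kc: "continuous_on {0..1} k" and t: "t \<in> {0..1}"
  shows "((\<lambda>t. w t * exp (- integral {0..t} k)) has_real_derivative
           r t * exp (- integral {0..t} k)) (at t within {0..1})"
proof -
  have "((\<lambda>t. integral {0..t} k) has_real_derivative k t) (at t within {0..1})"
    by (rule integral_has_real_derivative[OF kc t])
  from DERIV_mult[OF der[OF t] DERIV_chain2[OF DERIV_exp DERIV_minus[OF this]]]
  show ?thesis by (simp add: algebra_simps)
qed

lemma linear_ode_solution:
  fixes w k :: "real \<Rightarrow> real"
  assumes der: "\<And>t. t \<in> {0..1} \<Longrightarrow> (w has_real_derivative k t * w t) (at t within {0..1})"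
    and kc: "continuous_on {0..1} k" and t: "t \<in> {0..1}"
  shows "w t = w 0 * exp (integral {0..t} k)"
proof -
  have "((\<lambda>t. w t * exp (- integral {0..t} k)) has_real_derivative 0) (at s within {0..1})"
    if "s \<in> {0..1}" for s
    using integrating_factor_has_derivative[of w k "\<lambda>_. 0", OF _ kc that] der by simp
  then obtain c where "\<forall>s\<in>{0..1}. w s * exp (- integral {0..s} k) = c"
    using has_field_derivative_zero_constant[OF convex_real_interval(5)] by blast
  then have "w t * exp (- integral {0..t} k) = w 0" using t by force
  then show ?thesis by (simp add: exp_minus field_simps)
qed

lemma periodic_linear_ode_nonvanishing:
  fixes w k r :: "real \<Rightarrow> real"
  assumes der: "\<And>t. t \<in> {0..1} \<Longrightarrow> (w has_real_derivative k t * w t + r t) (at t within {0..1})"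
    and kc: "continuous_on {0..1} k" and r: "\<And>t. t \<in> {0..1} \<Longrightarrow> r t < 0"
    and per: "w 1 = w 0" and t0: "t0 \<in> {0..1}"
  shows "w t0 \<noteq> 0"
proof
  assume "w t0 = 0"
  define v where "v t = w t * exp (- integral {0..t} k)" for t
  have dv: "(v has_real_derivative r t * exp (- integral {0..t} k)) (at t within {0..1})"
    if "t \<in> {0..1}" for t
    unfolding v_def by (rule integrating_factor_has_derivative[OF der kc that])
  have vc: "continuous_on {0..1} v"
    using dv by (meson DERIV_continuous continuous_on_eq_continuous_within)
  \<comment> \<open>\<open>v\<close> has the sign of \<open>w\<close> and is strictly decreasing, so \<open>w\<close> cannot return to its
      initial value after reaching zero.\<close>
  have decr: "v b < v a" if "0 \<le> a" "a < b" "b \<le> 1" for a b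
  proof (rule DERIV_neg_imp_decreasing_open[OF \<open>a < b\<close>])
    fix s assume "a < s" "s < b"
    with that have "at s within {0..1} = at s" by (intro at_within_Icc_at) auto
    with dv[of s] r[of s] \<open>a < s\<close> \<open>s < b\<close> that
    show "\<exists>y. DERIV v s :> y \<and> y < 0" by (auto simp: mult_neg_pos)
  qed (use that in \<open>auto intro: continuous_on_subset[OF vc]\<close>)
  have "v t0 = 0" by (simp add: v_def \<open>w t0 = 0\<close>)
  then have "0 \<le> v 0" "v 1 \<le> 0"
    using decr[of 0 t0] decr[of t0 1] t0 by (cases "t0 = 0"; cases "t0 = 1"; force)+
  then have "0 \<le> w 0" "w 1 \<le> 0" by (simp_all add: v_def mult_le_0_iff)
  then have "v 0 = 0" "v 1 = 0" using per by (simp_all add: v_def)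
  then show False using decr[of 0 1] by simp
qed

section \<open>Abel equations: uniqueness and integral identities\<close>

lemma is_solution_continuous_on: "is_solution f x \<Longrightarrow> continuous_on {0..1} x"
  unfolding is_solution_def by (meson DERIV_continuous continuous_on_eq_continuous_within)

lemma is_solution_const: "(\<And>t. t \<in> {0..1} \<Longrightarrow> f t c = 0) \<Longrightarrow> is_solution f (\<lambda>_. c)"
  unfolding is_solution_def by simp

lemma periodic_solution_integral_zero:
  fixes F F' :: "real \<Rightarrow> real"
  assumes x: "is_solution f x" and per: "x 1 = x 0"
    and dF: "\<And>t. t \<in> {0..1} \<Longrightarrow> (F has_real_derivative F' (x t)) (at (x t))"
  shows "((\<lambda>t. F' (x t) * f t (x t)) has_integral 0) {0..1}"
proof -
  have "((\<lambda>t. F' (x t) * f t (x t)) has_integral F (x 1) - F (x 0)) {0..1}"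
  proof (rule fundamental_theorem_of_calculus)
    fix t :: real assume t: "t \<in> {0..1}"
    have "(x has_real_derivative f t (x t)) (at t within {0..1})"
      using x t unfolding is_solution_def by blast
    from DERIV_chain2[OF dF[OF t] this]
    show "((\<lambda>t. F (x t)) has_vector_derivative F' (x t) * f t (x t)) (at t within {0..1})"
      by (simp add: has_real_derivative_iff_has_vector_derivative)
  qed simp
  then show ?thesis using per by simp
qed

definition abel_secant :: "(real \<Rightarrow> real) \<Rightarrow> (real \<Rightarrow> real) \<Rightarrow> real \<Rightarrow> real \<Rightarrow> real \<Rightarrow> real" where
  "abel_secant A B t u v = A t * (u\<^sup>2 + u * v + v\<^sup>2) + B t * (u + v)"

lemma abel_field_diff:
  "abel_field A B t v - abel_field A B t u = abel_secant A B t u v * (v - u)"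
  unfolding abel_field_def abel_secant_def by (simp add: algebra_simps power2_eq_square power3_eq_cube)

lemma abel_secant_diag: "abel_secant A B t u u = 3 * A t * u\<^sup>2 + 2 * B t * u"
  unfolding abel_secant_def by (simp add: algebra_simps power2_eq_square)

lemma continuous_on_abel_secant [continuous_intros]:
  assumes "continuous_on S A" "continuous_on S B" "continuous_on S x" "continuous_on S y"
  shows "continuous_on S (\<lambda>t. abel_secant A B t (x t) (y t))"
  unfolding abel_secant_def by (intro continuous_intros assms)

context
  fixes A B :: "real \<Rightarrow> real"
  assumes Ac: "continuous_on {0..1} A" and Bc: "continuous_on {0..1} B"
begin

lemma abel_solution_diff:
  assumes x: "is_solution (abel_field A B) x" and y: "is_solution (abel_field A B) y"
    and t: "t \<in> {0..1}"
  shows "y t - x t = (y 0 - x 0) * exp (integral {0..t} (\<lambda>s. abel_secant A B s (x s) (y s)))"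
proof (rule linear_ode_solution[where w = "\<lambda>t. y t - x t", OF _ _ t])
  show "continuous_on {0..1} (\<lambda>s. abel_secant A B s (x s) (y s))"
    by (intro continuous_intros Ac Bc is_solution_continuous_on[OF x] is_solution_continuous_on[OF y])
  fix s :: real assume s: "s \<in> {0..1}"
  have "((\<lambda>t. y t - x t) has_real_derivative abel_field A B s (y s) - abel_field A B s (x s))
          (at s within {0..1})"
    using x y s unfolding is_solution_def by (intro DERIV_diff) auto
  then show "((\<lambda>t. y t - x t) has_real_derivative abel_secant A B s (x s) (y s) * (y s - x s))
               (at s within {0..1})"
    by (simp add: abel_field_diff)
qed

lemma abel_solutions_eq_iff:
  assumes "is_solution (abel_field A B) x" "is_solution (abel_field A B) y" "t \<in> {0..1}"
  shows "x t = y t \<longleftrightarrow> x 0 = y 0"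
  using abel_solution_diff[OF assms] by auto

lemma abel_solution_nonzero:
  assumes x: "is_solution (abel_field A B) x" and "x 0 \<noteq> 0" "t \<in> {0..1}"
  shows "x t \<noteq> 0"
proof -
  have "is_solution (abel_field A B) (\<lambda>_. 0)" by (rule is_solution_const) (simp add: abel_field_def)
  then show ?thesis using abel_solutions_eq_iff[OF x] assms by auto
qed

lemma poincare_abel_solution:
  assumes x: "is_solution (abel_field A B) x"
  shows "poincare (abel_field A B) (x 0) = x 1"
  unfolding poincare_def
proof (rule the_equality)
  fix v assume "\<exists>y. is_solution (abel_field A B) y \<and> y 0 = x 0 \<and> y 1 = v"
  then obtain y where "is_solution (abel_field A B) y" "y 0 = x 0" "y 1 = v" by blast
  then show "v = x 1" using abel_solutions_eq_iff[OF x, of y 1] by simp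
qed (use x in blast)

end

lemma inverse_sq_mult_linear_primitive:
  fixes \<alpha> \<beta> :: real
  assumes "\<alpha> \<noteq> 0 \<or> \<beta> \<noteq> 0"
  obtains F where "\<And>y. y \<noteq> 0 \<Longrightarrow> \<alpha> * y + \<beta> \<noteq> 0 \<Longrightarrow>
                     (F has_real_derivative inverse (y\<^sup>2 * (\<alpha> * y + \<beta>))) (at y)"
proof (cases "\<beta> = 0")
  case True
  then have "\<alpha> \<noteq> 0" using assms by simp
  have "((\<lambda>y. - inverse (2 * \<alpha> * y\<^sup>2)) has_real_derivative inverse (y\<^sup>2 * (\<alpha> * y + \<beta>))) (at y)"
    if "y \<noteq> 0" for y
    using that \<open>\<alpha> \<noteq> 0\<close> True
    by (auto intro!: derivative_eq_intros simp: field_simps power2_eq_square power3_eq_cube)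
  then show thesis using that by blast
next
  case False
  \<comment> \<open>Partial fractions: \<open>1/(y\<^sup>2 (\<alpha>y+\<beta>)) = 1/(\<beta>y\<^sup>2) - \<alpha>/(\<beta>\<^sup>2y) + \<alpha>\<^sup>2/(\<beta>\<^sup>2(\<alpha>y+\<beta>))\<close>.\<close>
  have "((\<lambda>y. - inverse (\<beta> * y) + \<alpha> / \<beta>\<^sup>2 * (ln \<bar>\<alpha> * y + \<beta>\<bar> - ln \<bar>y\<bar>))
          has_real_derivative inverse (y\<^sup>2 * (\<alpha> * y + \<beta>))) (at y)"
    if y: "y \<noteq> 0" "\<alpha> * y + \<beta> \<noteq> 0" for y
  proof -
    have "((\<lambda>y. - inverse (\<beta> * y)) has_real_derivative inverse (\<beta> * y\<^sup>2)) (at y)"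
      using y False by (auto intro!: derivative_eq_intros simp: field_simps power2_eq_square)
    moreover have "((\<lambda>y. ln \<bar>\<alpha> * y + \<beta>\<bar>) has_real_derivative \<alpha> / (\<alpha> * y + \<beta>)) (at y)"
      by (rule has_real_derivative_ln_abs[of "\<lambda>y. \<alpha> * y + \<beta>"])
         (use y in \<open>auto intro!: derivative_eq_intros\<close>)
    moreover have "((\<lambda>y. ln \<bar>y\<bar>) has_real_derivative 1 / y) (at y)"
      by (rule has_real_derivative_ln_abs[OF DERIV_ident y(1)])
    ultimately have "((\<lambda>y. - inverse (\<beta> * y) + \<alpha> / \<beta>\<^sup>2 * (ln \<bar>\<alpha> * y + \<beta>\<bar> - ln \<bar>y\<bar>))
        has_real_derivative inverse (\<beta> * y\<^sup>2) + \<alpha> / \<beta>\<^sup>2 * (\<alpha> / (\<alpha> * y + \<beta>) - 1 / y))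
        (at y)"
      by (intro DERIV_add DERIV_cmult DERIV_diff)
    then show ?thesis
      by (rule DERIV_cong) (use y False in \<open>simp add: divide_simps, simp add: algebra_simps power2_eq_square\<close>)
  qed
  then show thesis using that by blast
qed

context
  fixes A B x :: "real \<Rightarrow> real"
  assumes Ac: "continuous_on {0..1} A" and Bc: "continuous_on {0..1} B"
    and x: "is_solution (abel_field A B) x" and per: "x 1 = x 0" and x0: "x 0 \<noteq> 0"
begin

lemma abel_periodic_ratio_integral:
  assumes line: "\<And>t. t \<in> {0..1} \<Longrightarrow> \<alpha> * x t + \<beta> \<noteq> 0"
  shows "((\<lambda>t. (A t * x t + B t) / (\<alpha> * x t + \<beta>)) has_integral 0) {0..1}"
proof -
  have xnz: "x t \<noteq> 0" if "t \<in> {0..1}" for t by (rule abel_solution_nonzero[OF Ac Bc x x0 that])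
  have "\<alpha> \<noteq> 0 \<or> \<beta> \<noteq> 0" using line[of 0] by auto
  then obtain F where F: "\<And>y. y \<noteq> 0 \<Longrightarrow> \<alpha> * y + \<beta> \<noteq> 0 \<Longrightarrow>
                       (F has_real_derivative inverse (y\<^sup>2 * (\<alpha> * y + \<beta>))) (at y)"
    using inverse_sq_mult_linear_primitive by blast
  have "((\<lambda>t. inverse ((x t)\<^sup>2 * (\<alpha> * x t + \<beta>)) * abel_field A B t (x t)) has_integral 0) {0..1}"
    by (rule periodic_solution_integral_zero[OF x per F]) (use xnz line in auto)
  moreover have "inverse ((x t)\<^sup>2 * (\<alpha> * x t + \<beta>)) * abel_field A B t (x t)
                   = (A t * x t + B t) / (\<alpha> * x t + \<beta>)" if "t \<in> {0..1}" for t
  proof -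
    have "abel_field A B t (x t) = (x t)\<^sup>2 * (A t * x t + B t)"
      by (simp add: abel_field_def algebra_simps power2_eq_square power3_eq_cube)
    then show ?thesis using xnz[OF that] by (simp add: divide_inverse)
  qed
  ultimately show ?thesis by (rule has_integral_eq[rotated])
qed

lemma abel_periodic_multiplier_integral:
  assumes line: "\<And>t. t \<in> {0..1} \<Longrightarrow> \<alpha> * x t + \<beta> \<noteq> 0"
  shows "((\<lambda>t. 3 * A t * (x t)\<^sup>2 + 2 * B t * x t) has_integral
           integral {0..1} (\<lambda>t. (A t * \<beta> - \<alpha> * B t) * (x t)\<^sup>2 / (\<alpha> * x t + \<beta>))) {0..1}"
proof -
  have xnz: "x t \<noteq> 0" if "t \<in> {0..1}" for t by (rule abel_solution_nonzero[OF Ac Bc x x0 that])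
  \<comment> \<open>\<open>3Ax\<^sup>2 + 2Bx\<close> differs from the logarithmic derivative of \<open>x\<^sup>2 (\<alpha>x + \<beta>)\<close> by the
      integrand on the right.\<close>
  have "((\<lambda>y. 2 * ln \<bar>y\<bar> + ln \<bar>\<alpha> * y + \<beta>\<bar>) has_real_derivative
           2 * inverse (x t) + \<alpha> * inverse (\<alpha> * x t + \<beta>)) (at (x t))" if "t \<in> {0..1}" for t
  proof -
    have "((\<lambda>y. ln \<bar>\<alpha> * y + \<beta>\<bar>) has_real_derivative \<alpha> / (\<alpha> * x t + \<beta>)) (at (x t))"
      by (rule has_real_derivative_ln_abs[of "\<lambda>y. \<alpha> * y + \<beta>"])
         (use line[OF that] in \<open>auto intro!: derivative_eq_intros\<close>)
    from DERIV_add[OF DERIV_cmult[OF has_real_derivative_ln_abs[OF DERIV_ident xnz[OF that]], of 2] this]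
    show ?thesis by (simp add: divide_inverse)
  qed
  then have log: "((\<lambda>t. (2 * inverse (x t) + \<alpha> * inverse (\<alpha> * x t + \<beta>)) * abel_field A B t (x t))
                    has_integral 0) {0..1}"
    by (rule periodic_solution_integral_zero[OF x per])
  have rc: "continuous_on {0..1} (\<lambda>t. (A t * \<beta> - \<alpha> * B t) * (x t)\<^sup>2 / (\<alpha> * x t + \<beta>))"
    using line by (intro continuous_intros Ac Bc is_solution_continuous_on[OF x]) auto
  have eq: "3 * A t * (x t)\<^sup>2 + 2 * B t * x t =
          (2 * inverse (x t) + \<alpha> * inverse (\<alpha> * x t + \<beta>)) * abel_field A B t (x t)
          + (A t * \<beta> - \<alpha> * B t) * (x t)\<^sup>2 / (\<alpha> * x t + \<beta>)" if "t \<in> {0..1}" for t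
    using xnz[OF that] line[OF that] unfolding abel_field_def
    by (simp add: divide_simps) (simp add: algebra_simps power2_eq_square power3_eq_cube)
  note sum = has_integral_add[OF log integrable_integral[OF integrable_continuous_real[OF rc]]]
  show ?thesis by (rule has_integral_eq[OF _ sum[simplified]]) (simp add: eq)
qed

end

section \<open>The derivative of the Poincare map\<close>

lemma abel_secant_bound:
  assumes A: "\<bar>A t\<bar> \<le> K" and B: "\<bar>B t\<bar> \<le> K" and u: "\<bar>u\<bar> \<le> m" and v: "\<bar>v\<bar> \<le> m"
  shows "\<bar>abel_secant A B t u v\<bar> \<le> K * (3 * m\<^sup>2 + 2 * m)"
proof -
  have "\<bar>u\<bar> * \<bar>u\<bar> \<le> m * m" "\<bar>u\<bar> * \<bar>v\<bar> \<le> m * m" "\<bar>v\<bar> * \<bar>v\<bar> \<le> m * m"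
    using u v by (meson abs_ge_zero mult_mono order_trans)+
  then have "\<bar>u\<^sup>2 + u * v + v\<^sup>2\<bar> \<le> 3 * m\<^sup>2"
    using abs_triangle_ineq[of "u\<^sup>2 + u * v" "v\<^sup>2"] abs_triangle_ineq[of "u\<^sup>2" "u * v"]
    by (simp add: abs_mult power2_eq_square)
  moreover have "\<bar>u + v\<bar> \<le> 2 * m" using u v abs_triangle_ineq[of u v] by linarith
  ultimately have "\<bar>A t\<bar> * \<bar>u\<^sup>2 + u * v + v\<^sup>2\<bar> + \<bar>B t\<bar> * \<bar>u + v\<bar> \<le> K * (3 * m\<^sup>2) + K * (2 * m)"
    using A B by (intro add_mono mult_mono) auto
  moreover have "\<bar>abel_secant A B t u v\<bar> \<le> \<bar>A t\<bar> * \<bar>u\<^sup>2 + u * v + v\<^sup>2\<bar> + \<bar>B t\<bar> * \<bar>u + v\<bar>"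
    unfolding abel_secant_def by (metis abs_mult abs_triangle_ineq)
  ultimately show ?thesis by (simp add: distrib_left)
qed

lemma abel_secant_diag_dist:
  assumes A: "\<bar>A t\<bar> \<le> K" and B: "\<bar>B t\<bar> \<le> K" and u: "\<bar>u\<bar> \<le> m" and v: "\<bar>v\<bar> \<le> m"
    and m: "1 \<le> m"
  shows "\<bar>abel_secant A B t u v - abel_secant A B t u u\<bar> \<le> K * (3 * m\<^sup>2 + 2 * m) * \<bar>v - u\<bar>"
proof -
  have "0 \<le> K" using A by linarith
  have "\<bar>v + 2 * u\<bar> \<le> 3 * m" using u v abs_triangle_ineq[of v "2 * u"] by linarith
  then have "\<bar>A t\<bar> * \<bar>v + 2 * u\<bar> \<le> K * (3 * m)" using A by (intro mult_mono) auto
  then have "\<bar>A t * (v + 2 * u) + B t\<bar> \<le> K * (3 * m) + K"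
    using B abs_triangle_ineq[of "A t * (v + 2 * u)" "B t"] by (simp add: abs_mult)
  also have "\<dots> = K * (3 * m + 1)" by (simp add: algebra_simps)
  also have "\<dots> \<le> K * (3 * m\<^sup>2 + 2 * m)"
  proof (rule mult_left_mono)
    have "m \<le> m * m" using m mult_left_mono[of 1 m m] by simp
    then show "3 * m + 1 \<le> 3 * m\<^sup>2 + 2 * m" unfolding power2_eq_square using m by linarith
  qed (rule \<open>0 \<le> K\<close>)
  finally have "\<bar>v - u\<bar> * \<bar>A t * (v + 2 * u) + B t\<bar> \<le> \<bar>v - u\<bar> * (K * (3 * m\<^sup>2 + 2 * m))"
    by (rule mult_left_mono) simp
  moreover have "abel_secant A B t u v - abel_secant A B t u u = (v - u) * (A t * (v + 2 * u) + B t)"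
    unfolding abel_secant_def by (simp add: algebra_simps power2_eq_square)
  ultimately show ?thesis by (simp add: abs_mult mult.commute)
qed

lemma abel_secant_locally_bounded:
  fixes A B x :: "real \<Rightarrow> real"
  assumes Ac: "continuous_on {0..1} A" and Bc: "continuous_on {0..1} B"
    and xc: "continuous_on {0..1} x"
  obtains L where "0 \<le> L"
    and "\<And>t v. t \<in> {0..1} \<Longrightarrow> \<bar>v - x t\<bar> \<le> 1 \<Longrightarrow> \<bar>abel_secant A B t (x t) v\<bar> \<le> L"
    and "\<And>t v. t \<in> {0..1} \<Longrightarrow> \<bar>v - x t\<bar> \<le> 1 \<Longrightarrow>
           \<bar>abel_secant A B t (x t) v - abel_secant A B t (x t) (x t)\<bar> \<le> L * \<bar>v - x t\<bar>"
proof -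
  obtain KA where KA: "\<And>t. t \<in> {0..1} \<Longrightarrow> \<bar>A t\<bar> \<le> KA" using continuous_on_Icc_abs_bounded[OF Ac] by blast
  obtain KB where KB: "\<And>t. t \<in> {0..1} \<Longrightarrow> \<bar>B t\<bar> \<le> KB" using continuous_on_Icc_abs_bounded[OF Bc] by blast
  obtain M where M: "\<And>t. t \<in> {0..1} \<Longrightarrow> \<bar>x t\<bar> \<le> M" using continuous_on_Icc_abs_bounded[OF xc] by blast
  define K where "K = max KA KB"
  define m where "m = M + 1"
  have K: "\<bar>A t\<bar> \<le> K" "\<bar>B t\<bar> \<le> K" if "t \<in> {0..1}" for t
    using KA[OF that] KB[OF that] by (auto simp: K_def)
  have m: "1 \<le> m" using M[of 0] by (simp add: m_def)
  have near: "\<bar>x t\<bar> \<le> m" "\<bar>v\<bar> \<le> m" if "t \<in> {0..1}" "\<bar>v - x t\<bar> \<le> 1" for t v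
    using M[OF that(1)] that(2) by (auto simp: m_def)
  show thesis
  proof (rule that[of "K * (3 * m\<^sup>2 + 2 * m)"])
    show "0 \<le> K * (3 * m\<^sup>2 + 2 * m)" using K[of 0] m by simp
  next
    fix t v assume tv: "t \<in> {0..1}" "\<bar>v - x t\<bar> \<le> 1"
    show "\<bar>abel_secant A B t (x t) v\<bar> \<le> K * (3 * m\<^sup>2 + 2 * m)"
      by (rule abel_secant_bound) (use K[OF tv(1)] near[OF tv] in auto)
    show "\<bar>abel_secant A B t (x t) v - abel_secant A B t (x t) (x t)\<bar>
            \<le> K * (3 * m\<^sup>2 + 2 * m) * \<bar>v - x t\<bar>"
      by (rule abel_secant_diag_dist) (use K[OF tv(1)] near[OF tv] m in auto)
  qed
qed

context
  fixes A B :: "real \<Rightarrow> real"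
  assumes Ac: "continuous_on {0..1} A" and Bc: "continuous_on {0..1} B"
begin

lemma abel_solution_close:
  assumes x: "is_solution (abel_field A B) x" and y: "is_solution (abel_field A B) y"
    and L: "\<And>t v. t \<in> {0..1} \<Longrightarrow> \<bar>v - x t\<bar> \<le> 1 \<Longrightarrow> \<bar>abel_secant A B t (x t) v\<bar> \<le> L"
    and small: "\<bar>y 0 - x 0\<bar> * exp L \<le> 1 / 2" and t: "t \<in> {0..1}"
  shows "\<bar>y t - x t\<bar> \<le> \<bar>y 0 - x 0\<bar> * exp L"
proof -
  have "0 \<le> L" using L[of 0 "x 0"] by force
  have bound: "\<bar>y t - x t\<bar> \<le> \<bar>y 0 - x 0\<bar> * exp L"
    if t: "t \<in> {0..1}" and near: "\<And>u. u \<in> {0..t} \<Longrightarrow> \<bar>y u - x u\<bar> \<le> 1" for t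
  proof -
    have "norm (integral {0..t} (\<lambda>s. abel_secant A B s (x s) (y s))) \<le> L * (t - 0)"
    proof (rule integral_bound)
      show "continuous_on {0..t} (\<lambda>s. abel_secant A B s (x s) (y s))"
        using t by (intro continuous_intros continuous_on_subset[OF Ac] continuous_on_subset[OF Bc]
            continuous_on_subset[OF is_solution_continuous_on[OF x]]
            continuous_on_subset[OF is_solution_continuous_on[OF y]]) auto
      show "norm (abel_secant A B s (x s) (y s)) \<le> L" if "s \<in> {0..t}" for s
        using L[of s "y s"] near[OF that] that t by simp
    qed (use t in simp)
    also have "\<dots> \<le> L" using t \<open>0 \<le> L\<close> by (simp add: mult_left_le)
    finally show ?thesis
      unfolding abel_solution_diff[OF Ac Bc x y t] abs_mult by (intro mult_left_mono) auto
  qed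
  have "\<bar>y 0 - x 0\<bar> \<le> \<bar>y 0 - x 0\<bar> * exp L" using \<open>0 \<le> L\<close> by (simp add: mult_le_cancel_left1)
  \<comment> \<open>While \<open>y\<close> stays within \<open>1\<close> of \<open>x\<close>, the bound just proved keeps it within \<open>1/2\<close>.\<close>
  have below: "\<bar>y u - x u\<bar> < 1" if "u \<in> {0..1}" for u
  proof (rule continuous_on_stays_below[where d = "\<lambda>t. \<bar>y t - x t\<bar>", OF _ _ _ that])
    show "continuous_on {0..1} (\<lambda>t. \<bar>y t - x t\<bar>)"
      by (intro continuous_intros is_solution_continuous_on[OF x] is_solution_continuous_on[OF y])
    show "\<bar>y 0 - x 0\<bar> < 1" using \<open>\<bar>y 0 - x 0\<bar> \<le> _\<close> small by linarith
    show "\<bar>y s - x s\<bar> < 1" if "s \<in> {0..1}" "\<And>u. u \<in> {0..s} \<Longrightarrow> \<bar>y u - x u\<bar> \<le> 1" for s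
      using bound[OF that] small by linarith
  qed
  show ?thesis using bound[OF t] below t by (simp add: less_imp_le)
qed

lemma abel_secant_integral_close:
  assumes x: "is_solution (abel_field A B) x" and y: "is_solution (abel_field A B) y"
    and L: "\<And>t v. t \<in> {0..1} \<Longrightarrow> \<bar>v - x t\<bar> \<le> 1 \<Longrightarrow> \<bar>abel_secant A B t (x t) v\<bar> \<le> L"
    and L': "\<And>t v. t \<in> {0..1} \<Longrightarrow> \<bar>v - x t\<bar> \<le> 1 \<Longrightarrow>
               \<bar>abel_secant A B t (x t) v - abel_secant A B t (x t) (x t)\<bar> \<le> L * \<bar>v - x t\<bar>"
    and small: "\<bar>y 0 - x 0\<bar> * exp L \<le> 1 / 2"
  shows "\<bar>integral {0..1} (\<lambda>t. abel_secant A B t (x t) (y t))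
            - integral {0..1} (\<lambda>t. abel_secant A B t (x t) (x t))\<bar> \<le> L * (\<bar>y 0 - x 0\<bar> * exp L)"
proof -
  have "0 \<le> L" using L[of 0 "x 0"] by force
  have near: "\<bar>y t - x t\<bar> \<le> \<bar>y 0 - x 0\<bar> * exp L" if "t \<in> {0..1}" for t
    by (rule abel_solution_close[OF x y L small that])
  have cont: "continuous_on {0..1} (\<lambda>t. abel_secant A B t (x t) (z t))"
    if "is_solution (abel_field A B) z" for z
    by (intro continuous_intros Ac Bc is_solution_continuous_on[OF x] is_solution_continuous_on[OF that])
  have "integral {0..1} (\<lambda>t. abel_secant A B t (x t) (y t))
          - integral {0..1} (\<lambda>t. abel_secant A B t (x t) (x t))
        = integral {0..1} (\<lambda>t. abel_secant A B t (x t) (y t) - abel_secant A B t (x t) (x t))"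
    by (intro integral_diff[symmetric] integrable_continuous_real cont x y)
  also have "norm \<dots> \<le> L * (\<bar>y 0 - x 0\<bar> * exp L) * (1 - 0)"
  proof (rule integral_bound)
    show "continuous_on {0..1} (\<lambda>t. abel_secant A B t (x t) (y t) - abel_secant A B t (x t) (x t))"
      by (intro continuous_on_diff cont x y)
    show "norm (abel_secant A B t (x t) (y t) - abel_secant A B t (x t) (x t))
            \<le> L * (\<bar>y 0 - x 0\<bar> * exp L)" if "t \<in> {0..1}" for t
      using L'[OF that, of "y t"] near[OF that] \<open>0 \<le> L\<close> small
      by (simp add: order_trans[OF _ mult_left_mono])
  qed simp
  finally show ?thesis by simp
qed

lemma poincare_abel_has_derivative:
  assumes x: "is_solution (abel_field A B) x"
  shows "(poincare (abel_field A B) has_real_derivative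
            exp (integral {0..1} (\<lambda>t. 3 * A t * (x t)\<^sup>2 + 2 * B t * x t)))
         (at (x 0) within poincare_domain (abel_field A B))"
proof -
  let ?f = "abel_field A B" and ?D = "poincare_domain (abel_field A B)"
  obtain L where "0 \<le> L"
    and L: "\<And>t v. t \<in> {0..1} \<Longrightarrow> \<bar>v - x t\<bar> \<le> 1 \<Longrightarrow> \<bar>abel_secant A B t (x t) v\<bar> \<le> L"
    and L': "\<And>t v. t \<in> {0..1} \<Longrightarrow> \<bar>v - x t\<bar> \<le> 1 \<Longrightarrow>
               \<bar>abel_secant A B t (x t) v - abel_secant A B t (x t) (x t)\<bar> \<le> L * \<bar>v - x t\<bar>"
    using abel_secant_locally_bounded[OF Ac Bc is_solution_continuous_on[OF x]] by blast
  define Y where "Y s = (SOME y. is_solution ?f y \<and> y 0 = s)" for s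
  have Y: "is_solution ?f (Y s)" "Y s 0 = s" if "s \<in> ?D" for s
    using someI_ex[of "\<lambda>y. is_solution ?f y \<and> y 0 = s"] that
    unfolding Y_def poincare_domain_def by auto
  define I where "I s = integral {0..1} (\<lambda>t. abel_secant A B t (x t) (Y s t))" for s
  define I0 where "I0 = integral {0..1} (\<lambda>t. abel_secant A B t (x t) (x t))"
  \<comment> \<open>The difference quotient of the Poincare map at \<open>s\<close> is \<open>exp (I s)\<close>, and \<open>I s \<rightarrow> I0\<close>
      because solutions starting near \<open>x 0\<close> stay uniformly near \<open>x\<close>.\<close>
  have quotient: "exp (I s) = (poincare ?f s - poincare ?f (x 0)) / (s - x 0)"
    if "s \<in> ?D" "s \<noteq> x 0" for s
    using abel_solution_diff[OF Ac Bc x Y(1)[OF that(1)], of 1] Y[OF that(1)] that(2)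
      poincare_abel_solution[OF Ac Bc x] poincare_abel_solution[OF Ac Bc Y(1)[OF that(1)]]
    by (simp add: I_def)
  have dist0: "((\<lambda>s. \<bar>s - x 0\<bar> * exp L) \<longlongrightarrow> 0) (at (x 0) within ?D)"
    by (auto intro!: tendsto_eq_intros)
  have "eventually (\<lambda>s. s \<in> ?D \<and> \<bar>s - x 0\<bar> * exp L < 1 / 2) (at (x 0) within ?D)"
    using order_tendstoD(2)[OF dist0, of "1 / 2"] by (auto simp: eventually_at_filter elim: eventually_mono)
  then have "eventually (\<lambda>s. norm (I s - I0) \<le> L * (\<bar>s - x 0\<bar> * exp L)) (at (x 0) within ?D)"
  proof eventually_elim
    case (elim s)
    then show ?case
      using abel_secant_integral_close[OF x Y(1) L L'] Y(2) by (simp add: I_def I0_def)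
  qed
  from Lim_null_comparison[OF this tendsto_mult_right_zero[OF dist0]]
  have "(I \<longlongrightarrow> I0) (at (x 0) within ?D)" by (rule LIM_zero_cancel)
  then have "((\<lambda>s. (poincare ?f s - poincare ?f (x 0)) / (s - x 0)) \<longlongrightarrow> exp I0) (at (x 0) within ?D)"
    by (rule tendsto_exp[THEN Lim_transform_eventually])
       (auto simp: eventually_at_filter quotient intro: always_eventually)
  then show ?thesis
    unfolding has_field_derivative_iff I0_def abel_secant_diag .
qed

end

section \<open>Separable equations with a center\<close>

lemma increment_ge_derivative_lower_bound:
  fixes f f' :: "real \<Rightarrow> real"
  assumes "a < b" and fc: "continuous_on {a..b} f"
    and df: "\<And>y. a < y \<Longrightarrow> y < b \<Longrightarrow> (f has_real_derivative f' y) (at y)"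
    and c: "\<And>y. a < y \<Longrightarrow> y < b \<Longrightarrow> c \<le> f' y"
  shows "c * (b - a) \<le> f b - f a"
proof -
  obtain l z where z: "a < z" "z < b" "DERIV f z :> l" "f b - f a = (b - a) * l"
    using MVT[OF \<open>a < b\<close> fc] df by (meson real_differentiable_def)
  then have "l = f' z" using DERIV_unique[OF z(3) df] by simp
  then show ?thesis using z c[of z] \<open>a < b\<close> by (simp add: mult.commute mult_right_mono)
qed

lemma increasing_inverse_has_real_derivative:
  fixes U U' :: "real \<Rightarrow> real"
  assumes "lo < hi" and Uc: "continuous_on {lo..hi} U"
    and dU: "\<And>y. lo < y \<Longrightarrow> y < hi \<Longrightarrow> (U has_real_derivative U' y) (at y)"
    and pos: "\<And>y. lo < y \<Longrightarrow> y < hi \<Longrightarrow> 0 < U' y"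
  obtains g where "\<And>z. z \<in> {lo<..<hi} \<Longrightarrow> g (U z) = z"
    and "\<And>u. U lo < u \<Longrightarrow> u < U hi \<Longrightarrow>
           g u \<in> {lo<..<hi} \<and> U (g u) = u \<and> (g has_real_derivative inverse (U' (g u))) (at u)"
proof
  define g where "g = inv_into {lo<..<hi} U"
  have mono: "U a < U b" if "lo \<le> a" "a < b" "b \<le> hi" for a b
  proof (rule DERIV_pos_imp_increasing_open[OF \<open>a < b\<close>])
    show "\<exists>y. DERIV U s :> y \<and> 0 < y" if "a < s" "s < b" for s
      using dU[of s] pos[of s] that \<open>lo \<le> a\<close> \<open>b \<le> hi\<close> by auto
  qed (use that in \<open>auto intro: continuous_on_subset[OF Uc]\<close>)
  then have "inj_on U {lo<..<hi}" by (intro strict_mono_on_imp_inj_on strict_mono_onI) auto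
  then show gU: "g (U z) = z" if "z \<in> {lo<..<hi}" for z unfolding g_def using that by simp
  fix u assume u: "U lo < u" "u < U hi"
  then obtain z where z: "lo \<le> z" "z \<le> hi" "U z = u"
    using IVT'[of U lo u hi, OF _ _ _ Uc] \<open>lo < hi\<close> by fastforce
  then have zi: "z \<in> {lo<..<hi}" using u by (auto simp: order.order_iff_strict)
  have "(g has_derivative (*) (inverse (U' z))) (at (U z))"
  proof (rule has_derivative_inverse_strong[of "{lo<..<hi}" z U g "(*) (U' z)"])
    show "continuous_on {lo<..<hi} U" by (rule continuous_on_subset[OF Uc]) auto
    show "(U has_derivative (*) (U' z)) (at z)"
      using dU[of z] zi by (simp add: has_field_derivative_def mult.commute)
    show "(*) (U' z) \<circ> (*) (inverse (U' z)) = id" using pos[of z] zi by (auto simp: fun_eq_iff)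
  qed (use zi gU in auto)
  then show "g u \<in> {lo<..<hi} \<and> U (g u) = u \<and> (g has_real_derivative inverse (U' (g u))) (at u)"
    using gU[OF zi] zi z(3) by (simp add: has_field_derivative_def mult.commute)
qed

lemma positive_autonomous_flow:
  fixes W :: "real \<Rightarrow> real"
  assumes Wc: "continuous_on {lo..hi} W" and Wpos: "\<And>y. y \<in> {lo..hi} \<Longrightarrow> 0 < W y"
    and Wm: "\<And>y. y \<in> {lo..hi} \<Longrightarrow> W y \<le> m"
    and x0: "lo < x0" "x0 < hi" and R: "R * m \<le> x0 - lo" "R * m \<le> hi - x0"
  obtains Y where "Y 0 = x0" "\<And>\<tau>. \<bar>\<tau>\<bar> < R \<Longrightarrow> (Y has_real_derivative W (Y \<tau>)) (at \<tau>)"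
proof -
  \<comment> \<open>\<open>Y\<close> is the inverse of the time function \<open>U(y) = \<integral>\<^sub>l\<^sub>o\<^sup>y 1/W\<close>, shifted by \<open>U(x\<^sub>0)\<close>.\<close>
  define U where "U y = integral {lo..y} (\<lambda>z. inverse (W z))" for y
  have dU: "(U has_real_derivative inverse (W y)) (at y within {lo..hi})" if "y \<in> {lo..hi}" for y
    unfolding U_def using Wpos
    by (intro integral_has_real_derivative that continuous_on_inverse Wc) force
  have dU': "(U has_real_derivative inverse (W y)) (at y)" if "lo < y" "y < hi" for y
    using dU[of y] at_within_Icc_at[OF that] that by simp
  have Uc: "continuous_on {lo..hi} U"
    using dU by (meson DERIV_continuous continuous_on_eq_continuous_within)
  have "0 < m" using Wpos[of x0] Wm[of x0] x0 by simp
  have gap: "R \<le> U b - U a" if "lo \<le> a" "a < b" "b \<le> hi" "R * m \<le> b - a" for a b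
  proof -
    have "inverse m * (b - a) \<le> U b - U a"
    proof (rule increment_ge_derivative_lower_bound[OF \<open>a < b\<close> _ dU'])
      show "continuous_on {a..b} U" using that by (intro continuous_on_subset[OF Uc]) auto
      show "inverse m \<le> inverse (W y)" if "a < y" "y < b" for y
        using Wpos[of y] Wm[of y] that \<open>lo \<le> a\<close> \<open>b \<le> hi\<close> by (simp add: le_imp_inverse_le)
    qed (use that in auto)
    moreover have "R \<le> inverse m * (b - a)"
      using \<open>R * m \<le> b - a\<close> \<open>0 < m\<close> by (simp add: field_simps)
    ultimately show ?thesis by linarith
  qed
  obtain g where gU: "\<And>z. z \<in> {lo<..<hi} \<Longrightarrow> g (U z) = z"
    and dg: "\<And>u. U lo < u \<Longrightarrow> u < U hi \<Longrightarrow>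
               g u \<in> {lo<..<hi} \<and> U (g u) = u \<and> (g has_real_derivative inverse (inverse (W (g u)))) (at u)"
  proof (rule increasing_inverse_has_real_derivative[OF _ Uc dU'])
    show "0 < inverse (W y)" if "lo < y" "y < hi" for y using Wpos[of y] that by simp
  qed (use x0 in auto)
  show thesis
  proof (rule that[of "\<lambda>\<tau>. g (U x0 + \<tau>)"])
    show "g (U x0 + 0) = x0" using gU x0 by simp
    fix \<tau> :: real assume "\<bar>\<tau>\<bar> < R"
    then have "U lo < U x0 + \<tau>" "U x0 + \<tau> < U hi"
      using gap[of lo x0] gap[of x0 hi] x0 R by auto
    then have "(g has_real_derivative W (g (U x0 + \<tau>))) (at (U x0 + \<tau>))" using dg by simp
    moreover have "((\<lambda>\<tau>. U x0 + \<tau>) has_real_derivative 1) (at \<tau>)" by (auto intro!: derivative_eq_intros)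
    ultimately show "((\<lambda>\<tau>. g (U x0 + \<tau>)) has_real_derivative W (g (U x0 + \<tau>))) (at \<tau>)"
      using DERIV_chain2 by fastforce
  qed
qed

lemma separable_periodic_orbit:
  fixes \<phi> W :: "real \<Rightarrow> real" and f :: "real \<Rightarrow> real \<Rightarrow> real"
  assumes f: "\<And>t y. f t y = \<phi> t * W y"
    and \<phi>c: "continuous_on {0..1} \<phi>" and \<phi>0: "(\<phi> has_integral 0) {0..1}"
    and \<Phi>R: "\<And>t. t \<in> {0..1} \<Longrightarrow> \<bar>integral {0..t} \<phi>\<bar> < R"
    and Wc: "continuous_on {lo..hi} W" and Wnz: "\<And>y. y \<in> {lo..hi} \<Longrightarrow> W y \<noteq> 0"
    and Wm: "\<And>y. y \<in> {lo..hi} \<Longrightarrow> \<bar>W y\<bar> \<le> m"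
    and x0: "lo < x0" "x0 < hi" and R: "R * m \<le> x0 - lo" "R * m \<le> hi - x0"
  shows "periodic_orbit f x0"
proof -
  \<comment> \<open>The solution is \<open>Y(\<sigma>\<Phi>(t))\<close> with \<open>\<Phi>' = \<phi>\<close>, \<open>Y' = \<sigma>W(Y)\<close> and \<open>\<sigma>\<close> the sign of \<open>W\<close>
      near \<open>x\<^sub>0\<close>; it is periodic because \<open>\<Phi>(1) = \<Phi>(0) = 0\<close>.\<close>
  define \<Phi> where "\<Phi> t = integral {0..t} \<phi>" for t
  have d\<Phi>: "(\<Phi> has_real_derivative \<phi> t) (at t within {0..1})" if "t \<in> {0..1}" for t
    unfolding \<Phi>_def by (rule integral_has_real_derivative[OF \<phi>c that])
  have \<Phi>01: "\<Phi> 0 = 0" "\<Phi> 1 = 0" using integral_unique[OF \<phi>0] by (simp_all add: \<Phi>_def)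
  define \<sigma> where "\<sigma> = sgn (W x0)"
  have \<sigma>: "\<sigma> * \<sigma> = 1" using Wnz[of x0] x0 by (simp add: \<sigma>_def sgn_if)
  then have \<sigma>\<sigma>: "\<sigma> * (\<sigma> * z) = z" for z by (simp add: mult.assoc[symmetric])
  have pos: "0 < \<sigma> * W y" if "y \<in> {lo..hi}" for y
  proof -
    have "0 < W x0 * W y"
      using continuous_nonvanishing_same_sign[of lo hi W x0 y] Wc Wnz that x0 by auto
    then show ?thesis by (auto simp: \<sigma>_def sgn_if zero_less_mult_iff)
  qed
  have "\<sigma> * W y \<le> m" if "y \<in> {lo..hi}" for y
    using Wm[OF that] pos[OF that] \<sigma> by (auto simp: \<sigma>_def sgn_if)
  moreover have "continuous_on {lo..hi} (\<lambda>y. \<sigma> * W y)" by (intro continuous_intros Wc)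
  ultimately obtain Y where Y0: "Y 0 = x0"
    and dY: "\<And>\<tau>. \<bar>\<tau>\<bar> < R \<Longrightarrow> (Y has_real_derivative \<sigma> * W (Y \<tau>)) (at \<tau>)"
    using positive_autonomous_flow[of lo hi "\<lambda>y. \<sigma> * W y" m x0 R] x0 R pos by blast
  have "is_solution f (\<lambda>t. Y (\<sigma> * \<Phi> t))"
    unfolding is_solution_def
  proof
    fix t :: real assume t: "t \<in> {0..1}"
    have "\<bar>\<sigma> * \<Phi> t\<bar> < R" using \<Phi>R[OF t] \<sigma> by (auto simp: \<sigma>_def \<Phi>_def sgn_if)
    from DERIV_chain2[OF dY[OF this] DERIV_cmult[OF d\<Phi>[OF t], of \<sigma>]]
    show "((\<lambda>t. Y (\<sigma> * \<Phi> t)) has_real_derivative f t (Y (\<sigma> * \<Phi> t))) (at t within {0..1})"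
      by (simp add: f algebra_simps \<sigma>\<sigma>)
  qed
  then show ?thesis using Y0 \<Phi>01 by (auto simp: periodic_orbit_def)
qed

lemma separable_small_periodic_orbit:
  fixes \<phi> W :: "real \<Rightarrow> real" and f :: "real \<Rightarrow> real \<Rightarrow> real"
  assumes f: "\<And>t y. f t y = \<phi> t * W y"
    and \<phi>c: "continuous_on {0..1} \<phi>" and \<phi>0: "(\<phi> has_integral 0) {0..1}"
    and \<Phi>R: "\<And>t. t \<in> {0..1} \<Longrightarrow> \<bar>integral {0..t} \<phi>\<bar> < R" and "0 < R"
    and Wc: "continuous_on UNIV W"
    and Wnz: "\<And>y. 0 < \<bar>y\<bar> \<Longrightarrow> \<bar>y\<bar> < \<delta> \<Longrightarrow> W y \<noteq> 0"
    and Wsq: "\<And>y. \<bar>y\<bar> < \<delta> \<Longrightarrow> \<bar>W y\<bar> \<le> K * y\<^sup>2" and "0 < K"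
    and x0: "x0 \<noteq> 0" "\<bar>x0\<bar> < \<delta> / 2" "\<bar>x0\<bar> \<le> 1 / (6 * R * K)"
  shows "periodic_orbit f x0"
proof -
  \<comment> \<open>On \<open>[x\<^sub>0 - |x\<^sub>0|/2, x\<^sub>0 + |x\<^sub>0|/2]\<close> the field is nonzero and of size \<open>O(x\<^sub>0\<^sup>2)\<close>, so
      the flow needs time \<open>\<ge> R\<close> to leave it.\<close>
  have near: "\<bar>x0\<bar> / 2 \<le> \<bar>y\<bar>" "\<bar>y\<bar> \<le> 3 / 2 * \<bar>x0\<bar>" "\<bar>y\<bar> < \<delta>"
    if "y \<in> {x0 - \<bar>x0\<bar> / 2..x0 + \<bar>x0\<bar> / 2}" for y
    using that x0(2) by (auto simp: abs_if split: if_splits)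
  have "\<bar>W y\<bar> \<le> 3 * K * x0\<^sup>2" if "y \<in> {x0 - \<bar>x0\<bar> / 2..x0 + \<bar>x0\<bar> / 2}" for y
  proof -
    have "\<bar>W y\<bar> \<le> K * y\<^sup>2" by (rule Wsq[OF near(3)[OF that]])
    also have "\<dots> \<le> K * (3 / 2 * \<bar>x0\<bar>)\<^sup>2"
      using power_mono[OF near(2)[OF that] abs_ge_zero, of 2] \<open>0 < K\<close> by (intro mult_left_mono) auto
    finally show ?thesis using \<open>0 < K\<close> by (simp add: power2_eq_square)
  qed
  moreover have "R * (3 * K * x0\<^sup>2) \<le> \<bar>x0\<bar> / 2"
  proof -
    have "\<bar>x0\<bar> * (6 * R * K) \<le> 1" using x0(3) \<open>0 < R\<close> \<open>0 < K\<close> by (simp add: pos_le_divide_eq)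
    from mult_left_mono[OF this abs_ge_zero[of x0]] show ?thesis
      by (simp add: power2_eq_square algebra_simps)
  qed
  moreover have "W y \<noteq> 0" if "y \<in> {x0 - \<bar>x0\<bar> / 2..x0 + \<bar>x0\<bar> / 2}" for y
    using Wnz near[OF that] x0(1) by simp
  ultimately show ?thesis
    by (intro separable_periodic_orbit[OF f \<phi>c \<phi>0 \<Phi>R, of "x0 - \<bar>x0\<bar> / 2" "x0 + \<bar>x0\<bar> / 2"])
       (use x0(1) in \<open>auto intro: continuous_on_subset[OF Wc]\<close>)
qed

lemma separable_center:
  fixes \<phi> W :: "real \<Rightarrow> real" and f :: "real \<Rightarrow> real \<Rightarrow> real"
  assumes f: "\<And>t y. f t y = \<phi> t * W y"
    and \<phi>c: "continuous_on {0..1} \<phi>" and \<phi>0: "(\<phi> has_integral 0) {0..1}"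
    and Wc: "continuous_on UNIV W" and "0 < \<delta>"
    and Wnz: "\<And>y. 0 < \<bar>y\<bar> \<Longrightarrow> \<bar>y\<bar> < \<delta> \<Longrightarrow> W y \<noteq> 0"
    and Wsq: "\<And>y. \<bar>y\<bar> < \<delta> \<Longrightarrow> \<bar>W y\<bar> \<le> K * y\<^sup>2"
  shows "has_center f"
proof -
  obtain R0 where R0: "\<And>t. t \<in> {0..1} \<Longrightarrow> \<bar>integral {0..t} \<phi>\<bar> \<le> R0"
    using continuous_on_Icc_abs_bounded[OF indefinite_integral_continuous_1[OF integrable_continuous_real[OF \<phi>c]]]
    by blast
  define R where "R = \<bar>R0\<bar> + 1"
  have "0 < R" and \<Phi>R: "\<And>t. t \<in> {0..1} \<Longrightarrow> \<bar>integral {0..t} \<phi>\<bar> < R"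
    using R0 by (force simp: R_def)+
  have "0 < K"
  proof -
    have "0 < \<bar>W (\<delta> / 2)\<bar>" using Wnz[of "\<delta> / 2"] \<open>0 < \<delta>\<close> by simp
    also have "\<dots> \<le> K * (\<delta> / 2)\<^sup>2" using Wsq[of "\<delta> / 2"] \<open>0 < \<delta>\<close> by simp
    finally show ?thesis using \<open>0 < \<delta>\<close> by (simp add: zero_less_mult_iff)
  qed
  define e where "e = min (\<delta> / 2) (1 / (6 * R * K))"
  show ?thesis unfolding has_center_def
  proof (intro exI[of _ e] conjI allI impI)
    show "0 < e" using \<open>0 < \<delta>\<close> \<open>0 < R\<close> \<open>0 < K\<close> by (simp add: e_def)
    fix x0 :: real assume "\<bar>x0\<bar> < e"
    show "periodic_orbit f x0"
    proof (cases "x0 = 0")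
      case True
      have "W 0 = 0" using Wsq[of 0] \<open>0 < \<delta>\<close> by simp
      then have "is_solution f (\<lambda>_. 0)" by (intro is_solution_const) (simp add: f)
      then show ?thesis using True by (auto simp: periodic_orbit_def)
    next
      case False
      with \<open>\<bar>x0\<bar> < e\<close> show ?thesis
        by (intro separable_small_periodic_orbit[OF f \<phi>c \<phi>0 \<Phi>R \<open>0 < R\<close> Wc Wnz Wsq \<open>0 < K\<close>])
           (auto simp: e_def)
    qed
  qed
qed

lemma abel_proportional_center:
  fixes \<phi> :: "real \<Rightarrow> real"
  assumes "continuous_on {0..1} \<phi>" "(\<phi> has_integral 0) {0..1}" and ab: "a \<noteq> 0 \<or> b \<noteq> 0"
  shows "has_center (abel_field (\<lambda>t. a * \<phi> t) (\<lambda>t. b * \<phi> t))"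
proof (rule separable_center[where W = "\<lambda>y. y\<^sup>2 * (a * y + b)" and K = "\<bar>a\<bar> + \<bar>b\<bar>"
      and \<delta> = "if b = 0 then 1 else min 1 (\<bar>b\<bar> / (\<bar>a\<bar> + 1))"])
  show "abel_field (\<lambda>t. a * \<phi> t) (\<lambda>t. b * \<phi> t) t y = \<phi> t * (y\<^sup>2 * (a * y + b))" for t y
    by (simp add: abel_field_def algebra_simps power2_eq_square power3_eq_cube)
  show "continuous_on UNIV (\<lambda>y. y\<^sup>2 * (a * y + b))" by (intro continuous_intros)
  show "0 < (if b = 0 then 1 else min 1 (\<bar>b\<bar> / (\<bar>a\<bar> + 1)))" by simp
next
  fix y :: real
  assume "\<bar>y\<bar> < (if b = 0 then 1 else min 1 (\<bar>b\<bar> / (\<bar>a\<bar> + 1)))"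
  then have y1: "\<bar>y\<bar> < 1" and yb: "b \<noteq> 0 \<Longrightarrow> \<bar>y\<bar> * (\<bar>a\<bar> + 1) < \<bar>b\<bar>"
    by (auto split: if_splits simp: pos_less_divide_eq add_pos_nonneg)
  have "\<bar>a * y\<bar> \<le> \<bar>a\<bar>" using y1 by (simp add: abs_mult mult_left_le)
  then have "\<bar>a * y + b\<bar> \<le> \<bar>a\<bar> + \<bar>b\<bar>" using abs_triangle_ineq[of "a * y" b] by simp
  then have "y\<^sup>2 * \<bar>a * y + b\<bar> \<le> y\<^sup>2 * (\<bar>a\<bar> + \<bar>b\<bar>)" by (intro mult_left_mono) auto
  then show "\<bar>y\<^sup>2 * (a * y + b)\<bar> \<le> (\<bar>a\<bar> + \<bar>b\<bar>) * y\<^sup>2" by (simp add: abs_mult mult.commute)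
  assume "0 < \<bar>y\<bar>"
  have "a * y + b \<noteq> 0"
  proof (cases "b = 0")
    case True
    then show ?thesis using ab \<open>0 < \<bar>y\<bar>\<close> by simp
  next
    case False
    have "\<bar>a * y\<bar> < \<bar>b\<bar>" using yb[OF False] by (simp add: abs_mult algebra_simps)
    then show ?thesis by auto
  qed
  then show "y\<^sup>2 * (a * y + b) \<noteq> 0" using \<open>0 < \<bar>y\<bar>\<close> by simp
qed (use assms in auto)

section \<open>Orbits when \<open>A b\<^sub>1 - a\<^sub>1 B\<close> is a nonzero constant\<close>

definition at_most_one_nonzero_periodic_orbit :: "(real \<Rightarrow> real \<Rightarrow> real) \<Rightarrow> bool" where
  "at_most_one_nonzero_periodic_orbit f \<longleftrightarrow>
     (\<forall>p q. p \<noteq> 0 \<and> q \<noteq> 0 \<and> periodic_orbit f p \<and> periodic_orbit f q \<longrightarrow> p = q)"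

definition nonzero_periodic_orbits_hyperbolic :: "(real \<Rightarrow> real \<Rightarrow> real) \<Rightarrow> bool" where
  "nonzero_periodic_orbits_hyperbolic f \<longleftrightarrow>
     (\<forall>p. p \<noteq> 0 \<and> periodic_orbit f p \<longrightarrow> hyperbolic_orbit f p)"

context
  fixes A B :: "real \<Rightarrow> real" and a1 b1 C :: real
  assumes Ac: "continuous_on {0..1} A" and Bc: "continuous_on {0..1} B"
    and C: "\<And>t. A t * b1 - a1 * B t = C" and "C \<noteq> 0"
begin

lemma abel_periodic_orbit_avoids_line:
  assumes x: "is_solution (abel_field A B) x" and per: "x 1 = x 0" and x0: "x 0 \<noteq> 0"
    and t: "t \<in> {0..1}"
  shows "a1 * x t + b1 \<noteq> 0"
proof -
  have xnz: "x s \<noteq> 0" if "s \<in> {0..1}" for s by (rule abel_solution_nonzero[OF Ac Bc x x0 that])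
  \<comment> \<open>\<open>w = C (a\<^sub>1x + b\<^sub>1)\<close> solves \<open>w' = A x\<^sup>2 w - C\<^sup>2 x\<^sup>2\<close>, a linear equation with negative forcing.\<close>
  have "C * (a1 * x t + b1) \<noteq> 0"
  proof (rule periodic_linear_ode_nonvanishing[where w = "\<lambda>s. C * (a1 * x s + b1)"
        and k = "\<lambda>s. A s * (x s)\<^sup>2" and r = "\<lambda>s. - C\<^sup>2 * (x s)\<^sup>2"])
    fix s :: real assume s: "s \<in> {0..1}"
    have "((\<lambda>s. C * (a1 * x s + b1)) has_real_derivative C * (a1 * abel_field A B s (x s)))
            (at s within {0..1})"
      using x s unfolding is_solution_def by (auto intro!: derivative_eq_intros)
    moreover have "C * (a1 * abel_field A B s (x s))
                     = A s * (x s)\<^sup>2 * (C * (a1 * x s + b1)) + - C\<^sup>2 * (x s)\<^sup>2"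
      unfolding abel_field_def C[of s, symmetric] by (simp add: algebra_simps power2_eq_square power3_eq_cube)
    ultimately show "((\<lambda>s. C * (a1 * x s + b1)) has_real_derivative
                       A s * (x s)\<^sup>2 * (C * (a1 * x s + b1)) + - C\<^sup>2 * (x s)\<^sup>2) (at s within {0..1})"
      by simp
  next
    show "continuous_on {0..1} (\<lambda>s. A s * (x s)\<^sup>2)"
      by (intro continuous_intros Ac is_solution_continuous_on[OF x])
    show "- C\<^sup>2 * (x s)\<^sup>2 < 0" if "s \<in> {0..1}" for s using xnz[OF that] \<open>C \<noteq> 0\<close> by simp
  qed (use per t in auto)
  then show ?thesis by simp
qed

lemma abel_at_most_one_nonzero_periodic_orbit:
  "at_most_one_nonzero_periodic_orbit (abel_field A B)"
  unfolding at_most_one_nonzero_periodic_orbit_def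
proof (intro allI impI, elim conjE)
  fix p q assume "p \<noteq> 0" "q \<noteq> 0" "periodic_orbit (abel_field A B) p" "periodic_orbit (abel_field A B) q"
  then obtain x y where x: "is_solution (abel_field A B) x" "x 0 = p" "x 1 = p"
    and y: "is_solution (abel_field A B) y" "y 0 = q" "y 1 = q"
    unfolding periodic_orbit_def by blast
  have wx: "a1 * x t + b1 \<noteq> 0" and wy: "a1 * y t + b1 \<noteq> 0" if "t \<in> {0..1}" for t
    using abel_periodic_orbit_avoids_line x y \<open>p \<noteq> 0\<close> \<open>q \<noteq> 0\<close> that by auto
  define h where "h t = (A t * y t + B t) / (a1 * y t + b1) - (A t * x t + B t) / (a1 * x t + b1)" for t
  have "(h has_integral 0 - 0) {0..1}" unfolding h_def
    by (intro has_integral_diff abel_periodic_ratio_integral[OF Ac Bc] x(1) y(1) wx wy)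
       (use x y \<open>p \<noteq> 0\<close> \<open>q \<noteq> 0\<close> in auto)
  \<comment> \<open>Two distinct orbits never meet, and \<open>h\<close> is a Moebius difference with the sign of \<open>C (y - x)\<close>.\<close>
  show "p = q"
  proof (rule ccontr)
    assume "p \<noteq> q"
    have "h t = C * (y t - x t) / ((a1 * x t + b1) * (a1 * y t + b1))" if "t \<in> {0..1}" for t
      using wx[OF that] wy[OF that] unfolding h_def C[of t, symmetric] by (simp add: field_simps)
    moreover have "y t \<noteq> x t" if "t \<in> {0..1}" for t
      using abel_solutions_eq_iff[OF Ac Bc x(1) y(1) that] x y \<open>p \<noteq> q\<close> by simp
    ultimately have "h t \<noteq> 0" if "t \<in> {0..1}" for t using that wx wy \<open>C \<noteq> 0\<close> by simp
    moreover have "continuous_on {0..1} h" unfolding h_def using wx wy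
      by (intro continuous_intros Ac Bc is_solution_continuous_on[OF x(1)] is_solution_continuous_on[OF y(1)]) auto
    ultimately show False
      using integral_nonvanishing_nonzero[of 0 1 h 0] \<open>(h has_integral 0 - 0) {0..1}\<close> by simp
  qed
qed

lemma abel_nonzero_periodic_orbits_hyperbolic:
  "nonzero_periodic_orbits_hyperbolic (abel_field A B)"
  unfolding nonzero_periodic_orbits_hyperbolic_def
proof (intro allI impI, elim conjE)
  fix p assume "p \<noteq> 0" "periodic_orbit (abel_field A B) p"
  then obtain x where x: "is_solution (abel_field A B) x" "x 0 = p" "x 1 = p"
    unfolding periodic_orbit_def by blast
  have w: "a1 * x t + b1 \<noteq> 0" if "t \<in> {0..1}" for t
    using abel_periodic_orbit_avoids_line x \<open>p \<noteq> 0\<close> that by auto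
  have xnz: "x t \<noteq> 0" if "t \<in> {0..1}" for t
    using abel_solution_nonzero[OF Ac Bc x(1)] x \<open>p \<noteq> 0\<close> that by simp
  define J where "J = integral {0..1} (\<lambda>t. (x t)\<^sup>2 / (a1 * x t + b1))"
  have "continuous_on {0..1} (\<lambda>t. (x t)\<^sup>2 / (a1 * x t + b1))"
    using w by (intro continuous_intros is_solution_continuous_on[OF x(1)]) auto
  then have "J \<noteq> 0"
    using integral_nonvanishing_nonzero[of 0 1 "\<lambda>t. (x t)\<^sup>2 / (a1 * x t + b1)"] w xnz
    unfolding J_def by (simp add: integrable_integral integrable_continuous_real)
  have "integral {0..1} (\<lambda>t. C * (x t)\<^sup>2 / (a1 * x t + b1)) = C * J"
    unfolding J_def by (simp only: times_divide_eq_right[symmetric] integral_mult_right)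
  then have "integral {0..1} (\<lambda>t. 3 * A t * (x t)\<^sup>2 + 2 * B t * x t) = C * J"
    using abel_periodic_multiplier_integral[OF Ac Bc x(1) _ _ w] x \<open>p \<noteq> 0\<close>
    by (simp add: C integral_unique)
  with poincare_abel_has_derivative[OF Ac Bc x(1)] show "hyperbolic_orbit (abel_field A B) p"
    using \<open>C \<noteq> 0\<close> \<open>J \<noteq> 0\<close> x(2) unfolding hyperbolic_orbit_def by auto
qed

end

section \<open>Proportional coefficients\<close>

context
  fixes \<phi> :: "real \<Rightarrow> real" and a b :: real
  assumes \<phi>c: "continuous_on {0..1} \<phi>" and ab: "a \<noteq> 0 \<or> b \<noteq> 0"
    and no_center: "\<not> has_center (abel_field (\<lambda>t. a * \<phi> t) (\<lambda>t. b * \<phi> t))"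
begin

lemma abel_proportional_integral_nonzero: "integral {0..1} \<phi> \<noteq> 0"
  using abel_proportional_center[OF \<phi>c _ ab] no_center integrable_integral[OF integrable_continuous_real[OF \<phi>c]]
  by force

lemma abel_proportional_nonzero_orbit:
  assumes "p \<noteq> 0" and "periodic_orbit (abel_field (\<lambda>t. a * \<phi> t) (\<lambda>t. b * \<phi> t)) p"
  shows "a \<noteq> 0" and "p = - b / a"
proof -
  let ?f = "abel_field (\<lambda>t. a * \<phi> t) (\<lambda>t. b * \<phi> t)"
  have Ac: "continuous_on {0..1} (\<lambda>t. a * \<phi> t)" and Bc: "continuous_on {0..1} (\<lambda>t. b * \<phi> t)"
    by (intro continuous_intros \<phi>c)+
  obtain x where x: "is_solution ?f x" "x 0 = p" "x 1 = p"
    using assms(2) unfolding periodic_orbit_def by blast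
  \<comment> \<open>If the orbit avoided \<open>ax + b = 0\<close>, the ratio identity would give \<open>\<integral>\<phi> = 0\<close>.\<close>
  have "\<exists>t\<in>{0..1}. a * x t + b = 0"
  proof (rule ccontr)
    assume "\<not> ?thesis"
    then have line: "a * x t + b \<noteq> 0" if "t \<in> {0..1}" for t using that by blast
    have "((\<lambda>t. (a * \<phi> t * x t + b * \<phi> t) / (a * x t + b)) has_integral 0) {0..1}"
      using abel_periodic_ratio_integral[OF Ac Bc x(1) _ _ line] x \<open>p \<noteq> 0\<close> by simp
    moreover have "(a * \<phi> t * x t + b * \<phi> t) / (a * x t + b) = \<phi> t" if "t \<in> {0..1}" for t
      using line[OF that] by (simp add: field_simps)
    ultimately have "(\<phi> has_integral 0) {0..1}" by (rule has_integral_eq[rotated])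
    then show False using abel_proportional_integral_nonzero integral_unique by blast
  qed
  then obtain t0 where t0: "t0 \<in> {0..1}" "a * x t0 + b = 0" by blast
  then show "a \<noteq> 0" using ab by auto
  have c: "is_solution ?f (\<lambda>_. - b / a)"
    by (rule is_solution_const)
       (use \<open>a \<noteq> 0\<close> in \<open>simp add: abel_field_def field_simps power3_eq_cube power2_eq_square\<close>)
  have "x t0 = - b / a" using t0 \<open>a \<noteq> 0\<close> by (simp add: field_simps)
  then show "p = - b / a" using abel_solutions_eq_iff[OF Ac Bc x(1) c t0(1)] x(2) by simp
qed

lemma abel_proportional_orbits:
  "at_most_one_nonzero_periodic_orbit (abel_field (\<lambda>t. a * \<phi> t) (\<lambda>t. b * \<phi> t)) \<and>
   nonzero_periodic_orbits_hyperbolic (abel_field (\<lambda>t. a * \<phi> t) (\<lambda>t. b * \<phi> t))"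
  unfolding at_most_one_nonzero_periodic_orbit_def nonzero_periodic_orbits_hyperbolic_def
proof (intro conjI allI impI; elim conjE)
  let ?f = "abel_field (\<lambda>t. a * \<phi> t) (\<lambda>t. b * \<phi> t)"
  show "p = q" if "p \<noteq> 0" "q \<noteq> 0" "periodic_orbit ?f p" "periodic_orbit ?f q" for p q
    using abel_proportional_nonzero_orbit(2)[of p] abel_proportional_nonzero_orbit(2)[of q] that
    by simp
  fix p assume p: "p \<noteq> 0" "periodic_orbit ?f p"
  have "a \<noteq> 0" "p = - b / a" by (rule abel_proportional_nonzero_orbit[OF p])+
  then have "b \<noteq> 0" and b: "b = - (a * p)" using p by auto
  have "is_solution ?f (\<lambda>_. p)"
    by (intro is_solution_const) (simp add: abel_field_def b power3_eq_cube power2_eq_square algebra_simps)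
  from poincare_abel_has_derivative[OF _ _ this]
  have "(poincare ?f has_real_derivative exp (- b * p * integral {0..1} \<phi>)) (at p within poincare_domain ?f)"
    by (simp add: continuous_intros \<phi>c b algebra_simps power2_eq_square)
  moreover have "exp (- b * p * integral {0..1} \<phi>) \<noteq> 1"
    using \<open>b \<noteq> 0\<close> p(1) abel_proportional_integral_nonzero by simp
  ultimately show "hyperbolic_orbit ?f p" unfolding hyperbolic_orbit_def by blast
qed

end

lemma abel_affine_coefficients_orbits:
  fixes A B g :: "real \<Rightarrow> real"
  assumes gc: "continuous_on {0..1} g"
    and A: "\<And>t. A t = a0 + a1 * g t" and B: "\<And>t. B t = b0 + b1 * g t"
    and no_center: "\<not> has_center (abel_field A B)"
  shows "at_most_one_nonzero_periodic_orbit (abel_field A B) \<and>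
         nonzero_periodic_orbits_hyperbolic (abel_field A B)"
proof (cases "a0 * b1 - a1 * b0 = 0")
  case False
  have "continuous_on {0..1} A" "continuous_on {0..1} B"
    unfolding A B by (intro continuous_intros gc)+
  moreover have "A t * b1 - a1 * B t = a0 * b1 - a1 * b0" for t by (simp add: A B algebra_simps)
  ultimately show ?thesis
    using abel_at_most_one_nonzero_periodic_orbit abel_nonzero_periodic_orbits_hyperbolic False
    by blast
next
  case True
  \<comment> \<open>\<open>(a\<^sub>0, a\<^sub>1)\<close> and \<open>(b\<^sub>0, b\<^sub>1)\<close> are proportional, so \<open>A\<close> and \<open>B\<close> are multiples of one function.\<close>
  obtain a b \<phi> where "continuous_on {0..1} \<phi>" "a \<noteq> 0 \<or> b \<noteq> 0"
    and "A = (\<lambda>t. a * \<phi> t)" "B = (\<lambda>t. b * \<phi> t)"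
  proof (cases "a0 = 0 \<and> a1 = 0")
    case True
    show thesis by (rule that[of B 0 1]) (use True in \<open>auto simp: A B intro!: continuous_intros gc\<close>)
  next
    case False
    define \<mu> where "\<mu> = (if a0 \<noteq> 0 then b0 / a0 else b1 / a1)"
    have "b0 = \<mu> * a0" "b1 = \<mu> * a1"
      using False \<open>a0 * b1 - a1 * b0 = 0\<close> by (auto simp: \<mu>_def field_simps)
    then show thesis by (intro that[of A 1 \<mu>]) (auto simp: A B algebra_simps intro!: continuous_intros gc)
  qed
  then show ?thesis using abel_proportional_orbits no_center by blast
qed

theorem corollary1p1:
  fixes j k :: nat and a0 a1 a2 b0 b1 b2 :: real
  assumes "0 < j" "j < k"
    and "a1 + a2 = 0" "b1 + b2 = 0"
    and "\<not> has_center (abel_field (\<lambda>t. a0 + a1 * t ^ j + a2 * t ^ k)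
                                  (\<lambda>t. b0 + b1 * t ^ j + b2 * t ^ k))"
  shows "(\<forall>p q. p \<noteq> 0 \<and> q \<noteq> 0
             \<and> periodic_orbit (abel_field (\<lambda>t. a0 + a1 * t ^ j + a2 * t ^ k)
                                          (\<lambda>t. b0 + b1 * t ^ j + b2 * t ^ k)) p
             \<and> periodic_orbit (abel_field (\<lambda>t. a0 + a1 * t ^ j + a2 * t ^ k)
                                          (\<lambda>t. b0 + b1 * t ^ j + b2 * t ^ k)) q
             \<longrightarrow> p = q)
       \<and> (\<forall>p. p \<noteq> 0
             \<and> periodic_orbit (abel_field (\<lambda>t. a0 + a1 * t ^ j + a2 * t ^ k)
                                          (\<lambda>t. b0 + b1 * t ^ j + b2 * t ^ k)) p
             \<longrightarrow> hyperbolic_orbit (abel_field (\<lambda>t. a0 + a1 * t ^ j + a2 * t ^ k)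
                                          (\<lambda>t. b0 + b1 * t ^ j + b2 * t ^ k)) p)"
proof -
  have "a2 = - a1" "b2 = - b1" using assms(3,4) by linarith+
  then have "at_most_one_nonzero_periodic_orbit
               (abel_field (\<lambda>t. a0 + a1 * t ^ j + a2 * t ^ k) (\<lambda>t. b0 + b1 * t ^ j + b2 * t ^ k)) \<and>
             nonzero_periodic_orbits_hyperbolic
               (abel_field (\<lambda>t. a0 + a1 * t ^ j + a2 * t ^ k) (\<lambda>t. b0 + b1 * t ^ j + b2 * t ^ k))"
    using assms(5)
    by (intro abel_affine_coefficients_orbits[of "\<lambda>t. t ^ j - t ^ k" _ a0 a1 _ b0 b1])
       (auto simp: algebra_simps intro!: continuous_intros)
  then show ?thesis
    unfolding at_most_one_nonzero_periodic_orbit_def nonzero_periodic_orbits_hyperbolic_def .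
qed

end
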